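(* Let $f$ be a biderivation of $\mathcal{SV}(0)$, and let $\phi,\psi:\mathcal{SV}(0)\to\mathcal{SV}(0)$ be linear maps and $\rho_1,\rho_2,\rho_3,\theta_1,\theta_2,\theta_3$ linear complex-valued functions on $\mathcal{SV}(0)$ such that for all $x,y$, $$f(x,y)=\sum_{i=1}^3\rho_i(x)D_i(y)+[\phi(x),y]=\sum_{i=1}^3\theta_i(y)D_i(x)+[x,\psi(y)].$$ Then there exist $\lambda\in\mathbb{C}$, numbers $s_0^{(m)},e_0^{(m)}\in\mathbb{C}$ ($m\in\mathbb{Z}$), and a family $\{\mu_k\in\mathbb{C}\mid k\in\mathbb{Z}\}$ with only finitely many nonzero $\mu_k$, such that for every $m\in\mathbb{Z}$ $$\phi(L_m)=\lambda L_m+\sum_{k\in\mathbb{Z}\setminus\{-m\}}\frac{\mu_k}{m+k}M_{m+k}+s_0^{(m)}M_0,\qquad \psi(L_m)=\lambda L_m-\sum_{k\in\mathbb{Z}\setminus\{-m\}}\frac{\mu_k}{m+k}M_{m+k}+e_0^{(m)}M_0.$$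
   Context: $\mathcal{SV}(0)$ is the complex Lie algebra with basis $\{L_i,Y_i,M_i\mid i\in\mathbb{Z}\}$ and brackets $[L_m,L_n]=(m-n)L_{m+n}$, $[L_m,Y_n]=(\frac12 m-n)Y_{m+n}$, $[L_m,M_n]=-nM_{m+n}$, $[Y_m,Y_n]=(m-n)M_{m+n}$, $[Y_m,M_n]=[M_m,M_n]=0$. A biderivation of a Lie algebra $L$ is a bilinear map $f:L\times L\to L$ with $f([x,y],z)=[x,f(y,z)]+[f(x,z),y]$ and $f(x,[y,z])=[f(x,y),z]+[y,f(x,z)]$ for all $x,y,z\in L$. The linear maps $D_1,D_2,D_3$ are defined by $D_1(L_m)=M_m$, $D_1(Y_m)=D_1(M_m)=0$; $D_2(L_m)=mM_m$, $D_2(Y_m)=D_2(M_m)=0$; $D_3(L_m)=0$, $D_3(Y_m)=Y_m$, $D_3(M_m)=2M_m$. *)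

theory Defs
  imports Complex_Main "HOL-Library.Function_Algebras"
begin

text \<open>Basis of SV(0): L_i, Y_i, M_i (i integer).  Elements of SV(0) are finitely
supported coefficient functions on the basis.\<close>

datatype sv_basis = L int | Y int | M int

definition SV :: "(sv_basis \<Rightarrow> complex) set" where
  "SV = {x. finite {b. x b \<noteq> 0}}"

definition sv_supp :: "(sv_basis \<Rightarrow> complex) \<Rightarrow> sv_basis set" where
  "sv_supp x = {b. x b \<noteq> 0}"

definition sv_e :: "sv_basis \<Rightarrow> sv_basis \<Rightarrow> complex" where
  "sv_e b = (\<lambda>c. if c = b then 1 else 0)"

definition sv_scale :: "complex \<Rightarrow> (sv_basis \<Rightarrow> complex) \<Rightarrow> sv_basis \<Rightarrow> complex" where
  "sv_scale c x = (\<lambda>b. c * x b)"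

fun sv_bb :: "sv_basis \<Rightarrow> sv_basis \<Rightarrow> sv_basis \<Rightarrow> complex" where
  "sv_bb (L m) (L n) = sv_scale (of_int (m - n)) (sv_e (L (m + n)))"
| "sv_bb (L m) (Y n) = sv_scale (of_int m / 2 - of_int n) (sv_e (Y (m + n)))"
| "sv_bb (L m) (M n) = sv_scale (- of_int n) (sv_e (M (m + n)))"
| "sv_bb (Y m) (L n) = sv_scale (- (of_int n / 2 - of_int m)) (sv_e (Y (m + n)))"
| "sv_bb (M m) (L n) = sv_scale (of_int m) (sv_e (M (m + n)))"
| "sv_bb (Y m) (Y n) = sv_scale (of_int (m - n)) (sv_e (M (m + n)))"
| "sv_bb (Y m) (M n) = 0"
| "sv_bb (M m) (Y n) = 0"
| "sv_bb (M m) (M n) = 0"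

definition sv_br :: "(sv_basis \<Rightarrow> complex) \<Rightarrow> (sv_basis \<Rightarrow> complex) \<Rightarrow> sv_basis \<Rightarrow> complex" where
  "sv_br x y = (\<Sum>a\<in>sv_supp x. \<Sum>b\<in>sv_supp y. sv_scale (x a * y b) (sv_bb a b))"

definition sv_linear_map :: "((sv_basis \<Rightarrow> complex) \<Rightarrow> (sv_basis \<Rightarrow> complex)) \<Rightarrow> bool" where
  "sv_linear_map g \<longleftrightarrow> (\<forall>x\<in>SV. g x \<in> SV) \<and>
     (\<forall>x\<in>SV. \<forall>y\<in>SV. g (x + y) = g x + g y) \<and>
     (\<forall>c. \<forall>x\<in>SV. g (sv_scale c x) = sv_scale c (g x))"

definition sv_linear_functional :: "((sv_basis \<Rightarrow> complex) \<Rightarrow> complex) \<Rightarrow> bool" where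
  "sv_linear_functional r \<longleftrightarrow>
     (\<forall>x\<in>SV. \<forall>y\<in>SV. r (x + y) = r x + r y) \<and>
     (\<forall>c. \<forall>x\<in>SV. r (sv_scale c x) = c * r x)"

definition sv_biderivation ::
  "((sv_basis \<Rightarrow> complex) \<Rightarrow> (sv_basis \<Rightarrow> complex) \<Rightarrow> (sv_basis \<Rightarrow> complex)) \<Rightarrow> bool" where
  "sv_biderivation f \<longleftrightarrow>
     (\<forall>x\<in>SV. \<forall>y\<in>SV. f x y \<in> SV) \<and>
     (\<forall>x\<in>SV. \<forall>y\<in>SV. \<forall>z\<in>SV. f (x + y) z = f x z + f y z \<and> f x (y + z) = f x y + f x z) \<and>
     (\<forall>c. \<forall>x\<in>SV. \<forall>y\<in>SV. f (sv_scale c x) y = sv_scale c (f x y) \<and> f x (sv_scale c y) = sv_scale c (f x y)) \<and>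
     (\<forall>x\<in>SV. \<forall>y\<in>SV. \<forall>z\<in>SV.
        f (sv_br x y) z = sv_br x (f y z) + sv_br (f x z) y \<and>
        f x (sv_br y z) = sv_br (f x y) z + sv_br y (f x z))"

definition sv_D1 :: "(sv_basis \<Rightarrow> complex) \<Rightarrow> sv_basis \<Rightarrow> complex" where
  "sv_D1 x = (\<lambda>b. case b of M m \<Rightarrow> x (L m) | _ \<Rightarrow> 0)"

definition sv_D2 :: "(sv_basis \<Rightarrow> complex) \<Rightarrow> sv_basis \<Rightarrow> complex" where
  "sv_D2 x = (\<lambda>b. case b of M m \<Rightarrow> of_int m * x (L m) | _ \<Rightarrow> 0)"

definition sv_D3 :: "(sv_basis \<Rightarrow> complex) \<Rightarrow> sv_basis \<Rightarrow> complex" where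
  "sv_D3 x = (\<lambda>b. case b of L m \<Rightarrow> 0 | Y m \<Rightarrow> x (Y m) | M m \<Rightarrow> 2 * x (M m))"

definition sv_D :: "nat \<Rightarrow> (sv_basis \<Rightarrow> complex) \<Rightarrow> sv_basis \<Rightarrow> complex" where
  "sv_D i = (if i = 1 then sv_D1 else if i = 2 then sv_D2 else sv_D3)"

end

theory Submission
  imports Defs
begin

text \<open>Put \<open>P m = \<phi>(L\<^sub>m)\<close> and \<open>Q n = \<psi>(L\<^sub>n)\<close>. In the two given expressions of
\<open>f(L\<^sub>m, L\<^sub>n)\<close> the \<open>D\<^sub>i\<close>-terms only live on \<open>M\<^sub>n\<close> and \<open>M\<^sub>m\<close>, so \<open>[P m, L\<^sub>n]\<close> and
\<open>[L\<^sub>m, Q n]\<close> agree in every other coordinate. Each coordinate gives, for \<open>a + n = b + m\<close>, a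
linear relation between the \<open>a\<close>-th coefficient of \<open>P m\<close> and the \<open>b\<close>-th coefficient of \<open>Q n\<close>.
Choosing \<open>m, n\<close> so that a structure constant on one side vanishes kills the off-diagonal
\<open>L\<close>- and all \<open>Y\<close>-coefficients and makes the diagonal constant, while \<open>(m + k)\<close> times the
\<open>M\<^sub>m\<^sub>+\<^sub>k\<close>-coefficient of \<open>P m\<close> is independent of \<open>m\<close>; this is \<open>\<mu>\<^sub>k\<close>, and it vanishes for
almost all \<open>k\<close> because \<open>Q 0\<close> has finite support. The \<open>M\<^sub>0\<close>-coefficients stay free.\<close>

lemma sum_apply: "finite S \<Longrightarrow> sum g S c = (\<Sum>i\<in>S. g i c)"
  by (induction S rule: finite_induct) auto

lemma sum_eq_single:
  assumes "finite S" "\<And>a. a \<in> S \<Longrightarrow> a \<noteq> z \<Longrightarrow> g a = 0" "z \<notin> S \<Longrightarrow> g z = 0"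
  shows "sum g S = g z"
proof (cases "z \<in> S")
  case True
  then have "sum g S = g z + sum g (S - {z})"
    using assms(1) by (simp add: sum.remove)
  also have "sum g (S - {z}) = 0"
    using assms(2) by (intro sum.neutral) auto
  finally show ?thesis by simp
next
  case False
  then show ?thesis using assms by (metis sum.neutral)
qed

lemma sv_e_in_SV: "sv_e b \<in> SV"
  by (simp add: SV_def sv_e_def)

lemma sv_supp_sv_e: "sv_supp (sv_e b) = {b}"
  by (auto simp: sv_supp_def sv_e_def)

lemma finite_sv_supp: "x \<in> SV \<Longrightarrow> finite (sv_supp x)"
  by (simp add: SV_def sv_supp_def)

lemma sv_br_sv_e_right_single:
  assumes "x \<in> SV"
    and "\<And>i. L i \<noteq> z \<Longrightarrow> sv_bb (L i) b c = 0"
    and "\<And>i. Y i \<noteq> z \<Longrightarrow> sv_bb (Y i) b c = 0"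
    and "\<And>i. M i \<noteq> z \<Longrightarrow> sv_bb (M i) b c = 0"
  shows "sv_br x (sv_e b) c = x z * sv_bb z b c"
proof -
  have "sv_br x (sv_e b) c = (\<Sum>a\<in>sv_supp x. x a * sv_bb a b c)"
    unfolding sv_br_def sv_supp_sv_e
    by (simp add: sum_apply finite_sv_supp[OF assms(1)] sv_scale_def sv_e_def)
  also have "\<dots> = x z * sv_bb z b c"
  proof (rule sum_eq_single)
    show "x a * sv_bb a b c = 0" if "a \<noteq> z" for a
      using that assms(2-4) by (cases a) auto
  qed (use assms(1) in \<open>auto simp: SV_def sv_supp_def\<close>)
  finally show ?thesis .
qed

lemma sv_br_sv_e_left_single:
  assumes "y \<in> SV"
    and "\<And>i. L i \<noteq> z \<Longrightarrow> sv_bb b (L i) c = 0"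
    and "\<And>i. Y i \<noteq> z \<Longrightarrow> sv_bb b (Y i) c = 0"
    and "\<And>i. M i \<noteq> z \<Longrightarrow> sv_bb b (M i) c = 0"
  shows "sv_br (sv_e b) y c = y z * sv_bb b z c"
proof -
  have "sv_br (sv_e b) y c = (\<Sum>a\<in>sv_supp y. y a * sv_bb b a c)"
    unfolding sv_br_def sv_supp_sv_e
    by (simp add: sum_apply finite_sv_supp[OF assms(1)] sv_scale_def sv_e_def)
  also have "\<dots> = y z * sv_bb b z c"
  proof (rule sum_eq_single)
    show "y a * sv_bb b a c = 0" if "a \<noteq> z" for a
      using that assms(2-4) by (cases a) auto
  qed (use assms(1) in \<open>auto simp: SV_def sv_supp_def\<close>)
  finally show ?thesis .
qed

lemma sv_br_L_right:
  assumes "x \<in> SV"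
  shows "sv_br x (sv_e (L n)) (L t) = x (L (t - n)) * of_int (t - n - n)"
    and "sv_br x (sv_e (L n)) (Y t) = x (Y (t - n)) * (of_int (t - n) - of_int n / 2)"
    and "sv_br x (sv_e (L n)) (M t) = x (M (t - n)) * of_int (t - n)"
  using sv_br_sv_e_right_single[OF assms, where z = "L (t - n)" and c = "L t"]
    sv_br_sv_e_right_single[OF assms, where z = "Y (t - n)" and c = "Y t"]
    sv_br_sv_e_right_single[OF assms, where z = "M (t - n)" and c = "M t"]
  by (auto simp: sv_scale_def sv_e_def)

lemma sv_br_L_left:
  assumes "y \<in> SV"
  shows "sv_br (sv_e (L m)) y (L t) = y (L (t - m)) * of_int (m - (t - m))"
    and "sv_br (sv_e (L m)) y (Y t) = y (Y (t - m)) * (of_int m / 2 - of_int (t - m))"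
    and "sv_br (sv_e (L m)) y (M t) = y (M (t - m)) * of_int (m - t)"
  using sv_br_sv_e_left_single[OF assms, where z = "L (t - m)" and c = "L t"]
    sv_br_sv_e_left_single[OF assms, where z = "Y (t - m)" and c = "Y t"]
    sv_br_sv_e_left_single[OF assms, where z = "M (t - m)" and c = "M t"]
  by (auto simp: sv_scale_def sv_e_def)

lemma sv_D_sum_L_outside_M:
  "c \<noteq> M n \<Longrightarrow> (\<Sum>i\<in>{1..3::nat}. sv_scale (r i) (sv_D i (sv_e (L n)))) c = 0"
  by (auto simp: sum_apply sv_scale_def sv_D_def sv_D1_def sv_D2_def sv_D3_def sv_e_def
      split: sv_basis.split intro!: sum.neutral)

lemma sum_M_coeff:
  assumes "finite {k. \<mu> k \<noteq> 0}"
  shows "(\<Sum>k\<in>{k. \<mu> k \<noteq> 0 \<and> k \<noteq> - m}. sv_scale (\<mu> k / of_int (m + k)) (sv_e (M (m + k)))) c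
     = (case c of M j \<Rightarrow> \<mu> (j - m) / of_int j | _ \<Rightarrow> 0)"
proof -
  have fin: "finite {k. \<mu> k \<noteq> 0 \<and> k \<noteq> - m}"
    using assms by (rule finite_subset[rotated]) auto
  show ?thesis
  proof (cases c)
    case (M j)
    then show ?thesis
      unfolding sum_apply[OF fin]
      by (subst sum_eq_single[where z = "j - m"]) (auto simp: fin sv_scale_def sv_e_def)
  qed (auto simp: sum_apply[OF fin] sv_scale_def sv_e_def)
qed

locale bracket_compatible =
  fixes P Q :: "int \<Rightarrow> sv_basis \<Rightarrow> complex"
  assumes P_in_SV: "P m \<in> SV"
    and Q_in_SV: "Q n \<in> SV"
    and bracket_agree: "c \<noteq> M n \<Longrightarrow> c \<noteq> M m \<Longrightarrow>
       sv_br (P m) (sv_e (L n)) c = sv_br (sv_e (L m)) (Q n) c"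
begin

lemma L_coeff_eq:
  assumes "a + n = b + m"
  shows "P m (L a) * of_int (a - n) = Q n (L b) * of_int (m - b)"
proof -
  obtain t where "a = t - n" "b = t - m"
    using assms by (metis add_diff_cancel_right')
  then show ?thesis
    using bracket_agree[of "L t" n m] sv_br_L_right(1)[OF P_in_SV] sv_br_L_left(1)[OF Q_in_SV]
    by simp
qed

lemma Y_coeff_eq:
  assumes "a + n = b + m"
  shows "P m (Y a) * (of_int a - of_int n / 2) = Q n (Y b) * (of_int m / 2 - of_int b)"
proof -
  obtain t where "a = t - n" "b = t - m"
    using assms by (metis add_diff_cancel_right')
  then show ?thesis
    using bracket_agree[of "Y t" n m] sv_br_L_right(2)[OF P_in_SV] sv_br_L_left(2)[OF Q_in_SV]
    by simp
qed

lemma M_coeff_eq: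
  assumes "a + n = b + m" "a \<noteq> 0" "b \<noteq> 0"
  shows "P m (M a) * of_int a = - (Q n (M b) * of_int b)"
proof -
  obtain t where t: "a = t - n" "b = t - m"
    using assms(1) by (metis add_diff_cancel_right')
  with assms(2,3) have "sv_br (P m) (sv_e (L n)) (M t) = sv_br (sv_e (L m)) (Q n) (M t)"
    by (intro bracket_agree) auto
  then show ?thesis
    unfolding t sv_br_L_right(3)[OF P_in_SV] sv_br_L_left(3)[OF Q_in_SV]
    by (simp add: algebra_simps)
qed

lemma Q_L_off_diagonal: "b \<noteq> n \<Longrightarrow> Q n (L b) = 0"
  using L_coeff_eq[of n n b "2 * n - b"] by simp

lemma P_L_off_diagonal: "a \<noteq> m \<Longrightarrow> P m (L a) = 0"
  using L_coeff_eq[of a "a + 1" "2 * a + 1 - m" m] Q_L_off_diagonal[of "2 * a + 1 - m" "a + 1"]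
  by simp

lemma P_L_diagonal_eq_Q: "m \<noteq> n \<Longrightarrow> P m (L m) = Q n (L n)"
  using L_coeff_eq[of m n n m] by simp

definition lam :: complex where
  "lam = P 0 (L 0)"

lemma P_L: "P m (L a) = (if a = m then lam else 0)"
proof -
  have "P m (L m) = Q (\<bar>m\<bar> + 1) (L (\<bar>m\<bar> + 1))"
    by (rule P_L_diagonal_eq_Q) auto
  also have "\<dots> = lam"
    unfolding lam_def by (rule P_L_diagonal_eq_Q[symmetric]) auto
  finally show ?thesis by (simp add: P_L_off_diagonal)
qed

lemma Q_L: "Q n (L b) = (if b = n then lam else 0)"
  using P_L_diagonal_eq_Q[of "n + 1" n] by (simp add: P_L Q_L_off_diagonal)

text \<open>In \<open>Y_coeff_eq\<close> the right-hand factor vanishes for \<open>m = 2 b\<close>, the left-hand one for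
  \<open>n = 2 a\<close>; playing these off against each other kills all \<open>Y\<close>-coefficients.\<close>

lemma P_Y_even_index: "a \<noteq> b \<Longrightarrow> P (2 * b) (Y a) = 0"
proof -
  assume "a \<noteq> b"
  then have "(of_int a - of_int (3 * b - a) / 2 :: complex) \<noteq> 0"
    by (simp add: field_simps)
  then show ?thesis
    using Y_coeff_eq[of a "3 * b - a" b "2 * b"] by simp
qed

lemma Q_Y: "Q n (Y b) = 0"
proof -
  define w where "w = \<bar>n - b\<bar> + \<bar>b\<bar> + 1"
  have "P (2 * w) (Y (b + 2 * w - n)) = 0"
    by (rule P_Y_even_index) (auto simp: w_def)
  then have "Q n (Y b) * (of_int w - of_int b) = 0"
    using Y_coeff_eq[of "b + 2 * w - n" n b "2 * w"] by simp
  moreover have "w \<noteq> b"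
    by (auto simp: w_def)
  ultimately show ?thesis by simp
qed

lemma P_Y: "P m (Y a) = 0"
proof -
  have "P m (Y a) * (of_int a - of_int (2 * a + 1) / 2)
      = Q (2 * a + 1) (Y (3 * a + 1 - m)) * (of_int m / 2 - of_int (3 * a + 1 - m))"
    by (rule Y_coeff_eq) simp
  then have "P m (Y a) * (of_int a - of_int (2 * a + 1) / 2) = 0"
    by (simp only: Q_Y mult_zero_left)
  moreover have "(of_int a - of_int (2 * a + 1) / 2 :: complex) \<noteq> 0"
    by (simp add: field_simps)
  ultimately show ?thesis
    by (simp only: mult_eq_0_iff) blast
qed

text \<open>By \<open>M_coeff_eq\<close>, \<open>(m + k) \<cdot> P m (M\<^sub>m\<^sub>+\<^sub>k)\<close> does not depend on \<open>m\<close>; take \<open>m + k = 1\<close>.\<close>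

definition \<mu> :: "int \<Rightarrow> complex" where
  "\<mu> k = P (1 - k) (M 1)"

lemma Q_M_scaled: "n + k \<noteq> 0 \<Longrightarrow> Q n (M (n + k)) * of_int (n + k) = - \<mu> k"
  using M_coeff_eq[of 1 n "n + k" "1 - k"] by (simp add: \<mu>_def)

lemma P_M_scaled: "m + k \<noteq> 0 \<Longrightarrow> P m (M (m + k)) * of_int (m + k) = \<mu> k"
  using M_coeff_eq[of "m + k" "1 - k" 1 m] Q_M_scaled[of "1 - k" k] by simp

lemma P_M: "a \<noteq> 0 \<Longrightarrow> P m (M a) = \<mu> (a - m) / of_int a"
  using P_M_scaled[of m "a - m"] by (simp add: field_simps)

lemma Q_M: "b \<noteq> 0 \<Longrightarrow> Q n (M b) = - \<mu> (b - n) / of_int b"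
  using Q_M_scaled[of n "b - n"] by (simp add: field_simps)

lemma finite_support_\<mu>: "finite {k. \<mu> k \<noteq> 0}"
proof (rule finite_subset)
  show "{k. \<mu> k \<noteq> 0} \<subseteq> insert 0 (M -` sv_supp (Q 0))"
    using Q_M_scaled[of 0] by (force simp: sv_supp_def)
  show "finite (insert 0 (M -` sv_supp (Q 0)))"
    using finite_sv_supp[OF Q_in_SV] by (simp add: finite_vimageI inj_def)
qed

lemma normal_form:
  "P m = sv_scale lam (sv_e (L m))
      + (\<Sum>k\<in>{k. \<mu> k \<noteq> 0 \<and> k \<noteq> - m}. sv_scale (\<mu> k / of_int (m + k)) (sv_e (M (m + k))))
      + sv_scale (P m (M 0)) (sv_e (M 0))"
    "Q m = sv_scale lam (sv_e (L m))
      - (\<Sum>k\<in>{k. \<mu> k \<noteq> 0 \<and> k \<noteq> - m}. sv_scale (\<mu> k / of_int (m + k)) (sv_e (M (m + k))))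
      + sv_scale (Q m (M 0)) (sv_e (M 0))"
  by (rule ext, unfold plus_fun_apply minus_apply sum_M_coeff[OF finite_support_\<mu>],
      auto simp: sv_scale_def sv_e_def P_L P_Y P_M Q_L Q_Y Q_M split: sv_basis.split)+

end

theorem lemma3p2:
  fixes f :: "(sv_basis \<Rightarrow> complex) \<Rightarrow> (sv_basis \<Rightarrow> complex) \<Rightarrow> (sv_basis \<Rightarrow> complex)"
    and \<phi> \<psi> :: "(sv_basis \<Rightarrow> complex) \<Rightarrow> (sv_basis \<Rightarrow> complex)"
    and \<rho> \<theta> :: "nat \<Rightarrow> (sv_basis \<Rightarrow> complex) \<Rightarrow> complex"
  assumes bider: "sv_biderivation f"
    and lin_phi: "sv_linear_map \<phi>"
    and lin_psi: "sv_linear_map \<psi>"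
    and lin_rho: "\<And>i. i \<in> {1..3} \<Longrightarrow> sv_linear_functional (\<rho> i)"
    and lin_theta: "\<And>i. i \<in> {1..3} \<Longrightarrow> sv_linear_functional (\<theta> i)"
    and f_left: "\<And>x y. x \<in> SV \<Longrightarrow> y \<in> SV \<Longrightarrow>
       f x y = (\<Sum>i\<in>{1..3}. sv_scale (\<rho> i x) (sv_D i y)) + sv_br (\<phi> x) y"
    and f_right: "\<And>x y. x \<in> SV \<Longrightarrow> y \<in> SV \<Longrightarrow>
       f x y = (\<Sum>i\<in>{1..3}. sv_scale (\<theta> i y) (sv_D i x)) + sv_br x (\<psi> y)"
  shows "\<exists>(lam::complex) (s::int \<Rightarrow> complex) (e::int \<Rightarrow> complex) (\<mu>::int \<Rightarrow> complex).
           finite {k. \<mu> k \<noteq> 0} \<and>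
           (\<forall>m::int.
              \<phi> (sv_e (L m)) = sv_scale lam (sv_e (L m))
                 + (\<Sum>k\<in>{k. \<mu> k \<noteq> 0 \<and> k \<noteq> - m}. sv_scale (\<mu> k / of_int (m + k)) (sv_e (M (m + k))))
                 + sv_scale (s m) (sv_e (M 0)) \<and>
              \<psi> (sv_e (L m)) = sv_scale lam (sv_e (L m))
                 - (\<Sum>k\<in>{k. \<mu> k \<noteq> 0 \<and> k \<noteq> - m}. sv_scale (\<mu> k / of_int (m + k)) (sv_e (M (m + k))))
                 + sv_scale (e m) (sv_e (M 0)))"
proof -
  define P where "P m = \<phi> (sv_e (L m))" for m
  define Q where "Q n = \<psi> (sv_e (L n))" for n
  have "bracket_compatible P Q"
  proof
    show "P m \<in> SV" for m
      using lin_phi sv_e_in_SV by (simp add: P_def sv_linear_map_def)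
    show "Q n \<in> SV" for n
      using lin_psi sv_e_in_SV by (simp add: Q_def sv_linear_map_def)
    show "sv_br (P m) (sv_e (L n)) c = sv_br (sv_e (L m)) (Q n) c"
      if "c \<noteq> M n" "c \<noteq> M m" for c n m
    proof -
      have "f (sv_e (L m)) (sv_e (L n)) c = sv_br (P m) (sv_e (L n)) c"
        using f_left[OF sv_e_in_SV sv_e_in_SV] sv_D_sum_L_outside_M[OF that(1)]
        by (simp add: P_def)
      moreover have "f (sv_e (L m)) (sv_e (L n)) c = sv_br (sv_e (L m)) (Q n) c"
        using f_right[OF sv_e_in_SV sv_e_in_SV] sv_D_sum_L_outside_M[OF that(2)]
        by (simp add: Q_def)
      ultimately show ?thesis by simp
    qed
  qed
  then interpret bracket_compatible P Q .
  show ?thesis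
    using finite_support_\<mu> normal_form
    by (intro exI[of _ lam] exI[of _ "\<lambda>m. P m (M 0)"] exI[of _ "\<lambda>m. Q m (M 0)"] exI[of _ \<mu>])
      (simp add: P_def Q_def)
qed

end
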